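(* For all $N\ge2$, $n\ge0$ and all $x\in\mathbb{T}^N=\{x\in\mathbb{C}^N:|x_j|=1\ \forall j\}$, $\sigma_n^{N-1}(x)$ is real and $\sigma_n^{N-1}(x)\ge0$.
   Context: $(t)_m=\prod_{i=1}^m(t+i-1)$. $\boldsymbol{Z}_{N,k}=\{\alpha\in\mathbb{Z}^N:\sum_i\alpha_i=0,\ \sum_i|\alpha_i|=2k\}$, $S_k(x)=\sum_{\alpha\in\boldsymbol{Z}_{N,k}}x^\alpha$, and for $\delta>0$, $\sigma_n^\delta(x)=\sum_{k=0}^n\frac{(-n)_k}{(-n-\delta)_k}S_k(x)$. *)

theory Defs
  imports Complex_Main
begin

text \<open>Vectors in Z^N / C^N are modelled as functions on nat, with indices 0..N-1;
  multi-indices alpha are required to vanish outside {..<N}.\<close>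

definition Zset :: "nat \<Rightarrow> nat \<Rightarrow> (nat \<Rightarrow> int) set" where
  "Zset N k = {\<alpha>. (\<forall>i\<ge>N. \<alpha> i = 0) \<and> (\<Sum>i<N. \<alpha> i) = 0
                    \<and> (\<Sum>i<N. \<bar>\<alpha> i\<bar>) = 2 * int k}"

definition monom_pow :: "nat \<Rightarrow> (nat \<Rightarrow> complex) \<Rightarrow> (nat \<Rightarrow> int) \<Rightarrow> complex" where
  "monom_pow N x \<alpha> = (\<Prod>i<N. x i powi \<alpha> i)"

definition S :: "nat \<Rightarrow> nat \<Rightarrow> (nat \<Rightarrow> complex) \<Rightarrow> complex" where
  "S N k x = (\<Sum>\<alpha>\<in>Zset N k. monom_pow N x \<alpha>)"

definition sigma :: "nat \<Rightarrow> real \<Rightarrow> nat \<Rightarrow> (nat \<Rightarrow> complex) \<Rightarrow> complex" where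
  "sigma N \<delta> n x = (\<Sum>k=0..n. complex_of_real
       (pochhammer (- real n) k / pochhammer (- real n - \<delta>) k) * S N k x)"

end

theory Submission imports Defs "HOL-Library.FuncSet" begin

text \<open>Let W(m) be the exponent vectors of degree-m monomials in N variables and h_n the
  complete homogeneous symmetric polynomial of degree n. Sending a pair (\<beta>, \<gamma>) of elements
  of W(n) to its difference \<alpha> = \<beta> - \<gamma>, which lies in Z_{N,k}, and its minimum
  min \<beta> \<gamma>, which lies in W(n - k), is a bijection. On the torus x^{-1} = cnj x, so
  |h_n(x)|^2 = \<Sum>_k |W(n - k)| S_k(x). For \<delta> = N - 1 the coefficient of S_k in \<sigma>_n^\<delta> is
  exactly |W(n - k)| / |W(n)|, hence \<sigma>_n^{N-1}(x) = |h_n(x)|^2 / |W(n)| \<ge> 0.\<close>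

definition weak_compositions :: "nat \<Rightarrow> nat \<Rightarrow> (nat \<Rightarrow> nat) set" where
  "weak_compositions N m = {\<beta>. (\<forall>i\<ge>N. \<beta> i = 0) \<and> (\<Sum>i<N. \<beta> i) = m}"

definition monomial :: "nat \<Rightarrow> (nat \<Rightarrow> complex) \<Rightarrow> (nat \<Rightarrow> nat) \<Rightarrow> complex" where
  "monomial N x \<beta> = (\<Prod>i<N. x i ^ \<beta> i)"

definition complete_hom :: "nat \<Rightarrow> nat \<Rightarrow> (nat \<Rightarrow> complex) \<Rightarrow> complex" where
  "complete_hom N m x = (\<Sum>\<beta>\<in>weak_compositions N m. monomial N x \<beta>)"

lemma finite_vanishing_funs:
  assumes "finite A"
  shows "finite {f :: nat \<Rightarrow> 'a::zero. (\<forall>i\<ge>N. f i = 0) \<and> (\<forall>i<N. f i \<in> A)}"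
proof -
  have "{f :: nat \<Rightarrow> 'a. (\<forall>i\<ge>N. f i = 0) \<and> (\<forall>i<N. f i \<in> A)}
     \<subseteq> (\<lambda>g i. if i < N then g i else 0) ` PiE {..<N} (\<lambda>_. A)"
  proof
    fix f :: "nat \<Rightarrow> 'a" assume f: "f \<in> {f. (\<forall>i\<ge>N. f i = 0) \<and> (\<forall>i<N. f i \<in> A)}"
    then have "f = (\<lambda>i. if i < N then restrict f {..<N} i else 0)"
      by (auto simp: fun_eq_iff)
    moreover have "restrict f {..<N} \<in> PiE {..<N} (\<lambda>_. A)" using f by auto
    ultimately show "f \<in> (\<lambda>g i. if i < N then g i else 0) ` PiE {..<N} (\<lambda>_. A)" by blast
  qed
  moreover have "finite (PiE {..<N} (\<lambda>_. A))" using assms by (simp add: finite_PiE)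
  ultimately show ?thesis by (meson finite_imageI finite_subset)
qed

lemma finite_weak_compositions: "finite (weak_compositions N m)"
proof -
  have "weak_compositions N m \<subseteq> {f. (\<forall>i\<ge>N. f i = 0) \<and> (\<forall>i<N. f i \<in> {0..m})}"
  proof safe
    fix f i assume "f \<in> weak_compositions N m" "i < N"
    then have "f i \<le> (\<Sum>i<N. f i)" "(\<Sum>i<N. f i) = m"
      by (auto simp: weak_compositions_def intro!: member_le_sum)
    then show "f i \<in> {0..m}" by auto
  qed (auto simp: weak_compositions_def)
  then show ?thesis using finite_vanishing_funs[of "{0..m}" N] finite_subset by blast
qed

lemma finite_Zset: "finite (Zset N k)"
proof -
  have "Zset N k \<subseteq> {f. (\<forall>i\<ge>N. f i = 0) \<and> (\<forall>i<N. f i \<in> {-2 * int k..2 * int k})}"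
  proof safe
    fix f i assume f: "f \<in> Zset N k" and "i < N"
    then have "\<bar>f i\<bar> \<le> (\<Sum>i<N. \<bar>f i\<bar>)" by (intro member_le_sum) auto
    with f show "f i \<in> {-2 * int k..2 * int k}" by (auto simp: Zset_def)
  qed (auto simp: Zset_def)
  then show ?thesis using finite_vanishing_funs[of "{-2 * int k..2 * int k}" N] finite_subset by blast
qed

lemma card_weak_compositions: "card (weak_compositions N m) = (m + N - 1) choose m"
proof -
  have "bij_betw (\<lambda>\<beta>. map \<beta> [0..<N]) (weak_compositions N m)
          {l::nat list. length l = N \<and> sum_list l = m}"
  proof (rule bij_betw_byWitness[where f' = "\<lambda>l i. if i < N then l ! i else 0"])
    show "\<forall>\<beta>\<in>weak_compositions N m. (\<lambda>i. if i < N then map \<beta> [0..<N] ! i else 0) = \<beta>"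
      by (auto simp: weak_compositions_def fun_eq_iff)
    show "\<forall>l\<in>{l. length l = N \<and> sum_list l = m}. map (\<lambda>i. if i < N then l ! i else 0) [0..<N] = l"
      by (auto intro: nth_equalityI)
    show "(\<lambda>\<beta>. map \<beta> [0..<N]) ` weak_compositions N m \<subseteq> {l. length l = N \<and> sum_list l = m}"
      by (auto simp: weak_compositions_def sum_list_map_eq_sum_count2 atLeast0LessThan
          simp flip: sum_set_upt_conv_sum_list_nat)
    show "(\<lambda>l i. if i < N then l ! i else 0) ` {l. length l = N \<and> sum_list l = m}
            \<subseteq> weak_compositions N m"
      by (auto simp: weak_compositions_def sum_list_sum_nth atLeast0LessThan)
  qed
  then show ?thesis by (simp add: bij_betw_same_card card_length_sum_list)
qed

lemma pochhammer_minus_of_nat: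
  "pochhammer (- of_nat m) k = (-1) ^ k * fact k * (of_nat (m choose k) :: 'a::field_char_0)"
  by (simp add: binomial_gbinomial gbinomial_pochhammer flip: power_mult_distrib)

lemma pochhammer_ratio_eq_card_ratio:
  assumes "k \<le> n" "N \<ge> 1"
  shows "pochhammer (- real n) k / pochhammer (- real n - (real N - 1)) k
       = real (card (weak_compositions N (n - k))) / real (card (weak_compositions N n))"
proof -
  define M where "M = n + N - 1"
  have shift: "- real n - (real N - 1) = - real M" using assms by (simp add: M_def of_nat_diff)
  have "(M choose n) * (n choose k) = (M choose k) * ((M - k) choose (n - k))"
    using assms by (intro choose_mult) (auto simp: M_def)
  then have "real (M choose n) * real (n choose k) = real (M choose k) * real ((M - k) choose (n - k))"
    by (metis of_nat_mult)
  moreover have "M choose k \<noteq> 0" "M choose n \<noteq> 0" using assms by (auto simp: M_def)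
  moreover have "card (weak_compositions N (n - k)) = (M - k) choose (n - k)"
    "card (weak_compositions N n) = M choose n"
    using assms by (simp_all add: card_weak_compositions M_def)
  ultimately show ?thesis
    unfolding shift pochhammer_minus_of_nat by (simp add: field_simps)
qed

lemma monom_pow_diff_unimodular:
  assumes "\<forall>j<N. norm (x j) = 1"
  shows "monom_pow N x (\<lambda>i. int (\<beta> i) - int (\<gamma> i)) = monomial N x \<beta> * cnj (monomial N x \<gamma>)"
proof -
  have "x i powi (int (\<beta> i) - int (\<gamma> i)) = x i ^ \<beta> i * cnj (x i) ^ \<gamma> i" if "i < N" for i
  proof -
    have "norm (x i) = 1" using assms that by auto
    then have "x i \<noteq> 0" "x i * cnj (x i) = 1"
      using complex_norm_square[of "x i"] by auto
    then have "x i \<noteq> 0" "cnj (x i) = 1 / x i" by (auto simp: field_simps)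
    then show ?thesis by (simp add: power_int_diff power_one_over divide_inverse power_inverse)
  qed
  then show ?thesis unfolding monom_pow_def monomial_def by (simp add: prod.distrib)
qed

lemma Zset_sum_pos_neg_parts:
  assumes "\<alpha> \<in> Zset N k"
  shows "(\<Sum>i<N. nat (\<alpha> i)) = k" "(\<Sum>i<N. nat (- \<alpha> i)) = k"
proof -
  have s0: "(\<Sum>i<N. \<alpha> i) = 0" and s1: "(\<Sum>i<N. \<bar>\<alpha> i\<bar>) = 2 * int k"
    using assms by (auto simp: Zset_def)
  have "2 * int (\<Sum>i<N. nat (\<alpha> i)) = (\<Sum>i<N. \<alpha> i + \<bar>\<alpha> i\<bar>)"
    by (simp add: sum_distrib_left of_nat_sum) (intro sum.cong; auto)
  also have "\<dots> = 2 * int k" using s0 s1 by (simp add: sum.distrib)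
  finally show "(\<Sum>i<N. nat (\<alpha> i)) = k" by (simp only: mult_cancel_left of_nat_eq_iff) simp
  have "2 * int (\<Sum>i<N. nat (- \<alpha> i)) = (\<Sum>i<N. - \<alpha> i + \<bar>\<alpha> i\<bar>)"
    by (simp add: sum_distrib_left of_nat_sum) (intro sum.cong; auto)
  also have "\<dots> = 2 * int k" using s0 s1 by (simp add: sum_subtractf)
  finally show "(\<Sum>i<N. nat (- \<alpha> i)) = k" by (simp only: mult_cancel_left of_nat_eq_iff) simp
qed

lemma diff_weak_compositions_in_Zset:
  assumes "\<beta> \<in> weak_compositions N n" "\<gamma> \<in> weak_compositions N n"
  shows "(\<lambda>i. int (\<beta> i) - int (\<gamma> i)) \<in> Zset N (n - (\<Sum>i<N. min (\<beta> i) (\<gamma> i)))"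
    and "(\<Sum>i<N. min (\<beta> i) (\<gamma> i)) \<le> n"
proof -
  define m where "m = (\<Sum>i<N. min (\<beta> i) (\<gamma> i))"
  have sb: "(\<Sum>i<N. \<beta> i) = n" and sg: "(\<Sum>i<N. \<gamma> i) = n"
    using assms by (auto simp: weak_compositions_def)
  show mle: "(\<Sum>i<N. min (\<beta> i) (\<gamma> i)) \<le> n"
    unfolding sb[symmetric] by (intro sum_mono) auto
  have "(\<Sum>i<N. \<bar>int (\<beta> i) - int (\<gamma> i)\<bar>)
      = (\<Sum>i<N. int (\<beta> i) + int (\<gamma> i) - 2 * int (min (\<beta> i) (\<gamma> i)))"
    by (intro sum.cong) auto
  also have "\<dots> = 2 * int (n - m)"
  proof -
    have "(\<Sum>i<N. 2 * int (min (\<beta> i) (\<gamma> i))) = 2 * int m"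
      unfolding m_def of_nat_sum sum_distrib_left ..
    with sb sg mle show ?thesis
      by (simp add: m_def sum_subtractf sum.distrib flip: of_nat_sum)
  qed
  finally show "(\<lambda>i. int (\<beta> i) - int (\<gamma> i)) \<in> Zset N (n - m)"
    using assms sb sg by (simp add: Zset_def weak_compositions_def sum_subtractf flip: of_nat_sum)
qed

lemma bij_betw_diff_min:
  "bij_betw (\<lambda>(k, \<alpha>, \<mu>). (\<lambda>i. nat (\<alpha> i) + \<mu> i, \<lambda>i. nat (- \<alpha> i) + \<mu> i))
     (SIGMA k:{0..n}. Zset N k \<times> weak_compositions N (n - k))
     (weak_compositions N n \<times> weak_compositions N n)"
proof (rule bij_betw_byWitness[where f' = "\<lambda>(\<beta>, \<gamma>). (n - (\<Sum>i<N. min (\<beta> i) (\<gamma> i)),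
           \<lambda>i. int (\<beta> i) - int (\<gamma> i), \<lambda>i. min (\<beta> i) (\<gamma> i))"], safe)
  fix k \<alpha> \<mu> assume k: "k \<in> {0..n}" and \<alpha>: "\<alpha> \<in> Zset N k"
    and \<mu>: "\<mu> \<in> weak_compositions N (n - k)"
  show min: "(\<lambda>i. min (nat (\<alpha> i) + \<mu> i) (nat (- \<alpha> i) + \<mu> i)) = \<mu>"
    by (auto simp: fun_eq_iff)
  show "(\<lambda>i. int (nat (\<alpha> i) + \<mu> i) - int (nat (- \<alpha> i) + \<mu> i)) = \<alpha>"
    by (auto simp: fun_eq_iff)
  show "n - (\<Sum>i<N. min (nat (\<alpha> i) + \<mu> i) (nat (- \<alpha> i) + \<mu> i)) = k"
    using k \<mu> unfolding min by (simp add: weak_compositions_def)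
  show "(\<lambda>i. nat (\<alpha> i) + \<mu> i) \<in> weak_compositions N n"
    "(\<lambda>i. nat (- \<alpha> i) + \<mu> i) \<in> weak_compositions N n"
    using \<alpha> \<mu> k Zset_sum_pos_neg_parts[OF \<alpha>]
    by (auto simp: Zset_def weak_compositions_def sum.distrib)
next
  fix \<beta> \<gamma> assume "\<beta> \<in> weak_compositions N n" "\<gamma> \<in> weak_compositions N n"
  then show "n - (\<Sum>i<N. min (\<beta> i) (\<gamma> i)) \<in> {0..n}"
    "(\<lambda>i. int (\<beta> i) - int (\<gamma> i)) \<in> Zset N (n - (\<Sum>i<N. min (\<beta> i) (\<gamma> i)))"
    "(\<lambda>i. min (\<beta> i) (\<gamma> i)) \<in> weak_compositions N (n - (n - (\<Sum>i<N. min (\<beta> i) (\<gamma> i))))"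
    using diff_weak_compositions_in_Zset by (auto simp: weak_compositions_def)
  show "(\<lambda>i. nat (int (\<beta> i) - int (\<gamma> i)) + min (\<beta> i) (\<gamma> i)) = \<beta>"
    "(\<lambda>i. nat (- (int (\<beta> i) - int (\<gamma> i))) + min (\<beta> i) (\<gamma> i)) = \<gamma>"
    by (auto simp: fun_eq_iff)
qed

lemma sum_monom_pow_diff_pairs:
  "(\<Sum>(\<beta>, \<gamma>)\<in>weak_compositions N n \<times> weak_compositions N n.
       monom_pow N x (\<lambda>i. int (\<beta> i) - int (\<gamma> i)))
   = (\<Sum>k=0..n. of_nat (card (weak_compositions N (n - k))) * S N k x)"
proof -
  have "(\<Sum>k=0..n. of_nat (card (weak_compositions N (n - k))) * S N k x)
      = (\<Sum>k=0..n. \<Sum>(\<alpha>, \<mu>)\<in>Zset N k \<times> weak_compositions N (n - k). monom_pow N x \<alpha>)"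
    by (simp add: S_def sum.cartesian_product[symmetric] sum_distrib_right mult.commute)
  also have "\<dots> = (\<Sum>(k, \<alpha>, \<mu>)\<in>(SIGMA k:{0..n}. Zset N k \<times> weak_compositions N (n - k)).
                      monom_pow N x \<alpha>)"
    by (subst sum.Sigma) (auto simp: finite_Zset finite_weak_compositions case_prod_unfold)
  also have "\<dots> = (\<Sum>t\<in>(SIGMA k:{0..n}. Zset N k \<times> weak_compositions N (n - k)).
          (\<lambda>(\<beta>, \<gamma>). monom_pow N x (\<lambda>i. int (\<beta> i) - int (\<gamma> i)))
            ((\<lambda>(k, \<alpha>, \<mu>). (\<lambda>i. nat (\<alpha> i) + \<mu> i, \<lambda>i. nat (- \<alpha> i) + \<mu> i)) t))"
    by (intro sum.cong refl) (auto intro!: arg_cong[where f = "monom_pow N x"])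
  also have "\<dots> = (\<Sum>(\<beta>, \<gamma>)\<in>weak_compositions N n \<times> weak_compositions N n.
                      monom_pow N x (\<lambda>i. int (\<beta> i) - int (\<gamma> i)))"
    by (rule sum.reindex_bij_betw[OF bij_betw_diff_min])
  finally show ?thesis ..
qed

lemma norm_complete_hom_squared:
  assumes "\<forall>j<N. norm (x j) = 1"
  shows "complex_of_real ((norm (complete_hom N n x))\<^sup>2)
       = (\<Sum>k=0..n. of_nat (card (weak_compositions N (n - k))) * S N k x)"
proof -
  have "complex_of_real ((norm (complete_hom N n x))\<^sup>2) = complete_hom N n x * cnj (complete_hom N n x)"
    by (rule complex_norm_square)
  also have "\<dots> = (\<Sum>(\<beta>, \<gamma>)\<in>weak_compositions N n \<times> weak_compositions N n.
                      monomial N x \<beta> * cnj (monomial N x \<gamma>))"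
    unfolding complete_hom_def cnj_sum sum_product by (simp add: sum.cartesian_product)
  also have "\<dots> = (\<Sum>(\<beta>, \<gamma>)\<in>weak_compositions N n \<times> weak_compositions N n.
                      monom_pow N x (\<lambda>i. int (\<beta> i) - int (\<gamma> i)))"
    using assms by (simp add: monom_pow_diff_unimodular)
  finally show ?thesis by (simp only: sum_monom_pow_diff_pairs)
qed

lemma sigma_eq_norm_complete_hom_squared:
  assumes "N \<ge> 1" and "\<forall>j<N. norm (x j) = 1"
  shows "sigma N (real N - 1) n x
       = complex_of_real ((norm (complete_hom N n x))\<^sup>2 / real (card (weak_compositions N n)))"
proof -
  define A where "A = real (card (weak_compositions N n))"
  have "sigma N (real N - 1) n x
      = (\<Sum>k=0..n. complex_of_real (1 / A) * (of_nat (card (weak_compositions N (n - k))) * S N k x))"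
    unfolding sigma_def A_def using assms(1)
    by (intro sum.cong refl) (simp add: pochhammer_ratio_eq_card_ratio)
  also have "\<dots> = complex_of_real (1 / A) * complex_of_real ((norm (complete_hom N n x))\<^sup>2)"
    by (simp only: norm_complete_hom_squared[OF assms(2)] sum_distrib_left)
  finally show ?thesis by (simp add: A_def)
qed

theorem corollary4p6:
  fixes N n :: nat and x :: "nat \<Rightarrow> complex"
  assumes "N \<ge> 2"
    and "\<forall>j<N. norm (x j) = 1"
  shows "sigma N (real N - 1) n x \<in> \<real> \<and> 0 \<le> Re (sigma N (real N - 1) n x)"
  using sigma_eq_norm_complete_hom_squared[of N x n] assms by (simp add: Reals_of_real)

end
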